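(* Let $n \geqslant 1$ and let $\lambda$ be an integer partition with $\lambda_1+\ell(\lambda)-1=n$. Let $c=(1,2,\ldots,n+1)\in\mathfrak{S}_{n+1}$ (an $(n+1)$-cycle). Then $\mathcal{RSK}_{\lambda,c}$ coincides with the Hillman–Grassl correspondence $\mathcal{HG}_\lambda$.
   Context: Ferrers diagram $\mathrm{Fer}(\lambda)=\{(i,j)\in(\mathbb{N}^* )^2:j\le\lambda_i\}$. Diagonals: $D_k(\lambda)=\{(i,j)\in\mathrm{Fer}(\lambda):\lambda_1+i-j=k\}$ for $k=1,\dots,n$, $\delta_k=\max\{\min(i,j):(i,j)\in D_k(\lambda)\}$, and $(i,j)\in D_k(\lambda)$ has coordinates $\langle k,\delta\rangle_\lambda$ with $\delta=\delta_k-\min(i,j)+1$. $\square_k(\lambda)$ is the order ideal of $\mathrm{Fer}(\lambda)$ (componentwise order) generated by $D_k(\lambda)$. Row/column labels: label the unit segments of the south-east boundary of $\mathrm{Fer}(\lambda)$ by $1,\dots,n+1$ from top-right to bottom-left; rows and columns inherit the labels of their boundary segments; $\mathbf L$ = row labels, $\mathbf R$ = column labels; $[\ell,r]$ denotes the box with row label $\ell$ and column label $r$ (it exists iff $\ell<r$). Greene–Kleitman invariant: for an acyclic directed graph $G$ and $g:G_0\to\mathbb{N}$, $M_t$ ($t\ge1$) is the maximum over $t$-tuples of (possibly one-vertex) directed paths of the sum of $g$ over the union of their vertex sets, $M_0=0$, $\mathrm{GK}_G(g)=(M_t-M_{t-1})_{t\ge1}$. Hillman–Grassl correspondence (in the form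 used here): let $H_\lambda$ be the directed graph on $\mathrm{Fer}(\lambda)$ with arrows $(i,j)\to(i,j+1)$ and $(i+1,j)\to(i,j)$; for a filling $f$, $\mathcal{HG}_\lambda(f)(\langle k,\delta\rangle_\lambda)$ is the $\delta$-th part of $\mathrm{GK}$ of $f$ restricted to the full subgraph of $H_\lambda$ on $\square_k(\lambda)$. $\mathcal{RSK}_{\lambda,c}$: $\mathrm{AR}(c)$ is the directed graph on transpositions $(i,j)$, $1\le i<j\le n+1$, with arrows $(i,j)\to(i,c(j))$ if $i<c(j)$ and $(i,j)\to(c(i),j)$ if $c(i)<j$; $\mathrm{AR}^{[k]}(c)$ is its full subgraph on $(\ell,r)$ with $\ell\le k<r$. For a filling $f$ of $\lambda$, $\mathrm{rep}_{\lambda,c}(f)(\ell,r)=f([\ell,r])$ if $\ell\in\mathbf L,r\in\mathbf R,\ell<r$ and $0$ otherwise; $\mathcal{RSK}_{\lambda,c}(f)(\langle k,\delta\rangle_\lambda)$ is the $\delta$-th part of $\mathrm{GK}_{\mathrm{AR}^{[k]}(c)}$ of the restriction of $\mathrm{rep}_{\lambda,c}(f)$ to $\mathrm{AR}^{[k]}(c)$. *)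

theory Defs
  imports Main
begin

(* A partition lambda is a list of positive naturals, weakly decreasing;
   lambda_i = lam ! (i-1) for 1 <= i <= length lam, lambda_1 = hd lam. *)
definition is_partition :: "nat list \<Rightarrow> bool" where
  "is_partition lam \<longleftrightarrow> sorted_wrt (\<ge>) lam \<and> 0 \<notin> set lam"

definition fer :: "nat list \<Rightarrow> (nat \<times> nat) set" where
  "fer lam = {(i,j). 1 \<le> i \<and> i \<le> length lam \<and> 1 \<le> j \<and> j \<le> lam ! (i - 1)}"

definition diag :: "nat list \<Rightarrow> nat \<Rightarrow> (nat \<times> nat) set" where
  "diag lam k = {(i,j) \<in> fer lam. hd lam + i = k + j}"

definition delta_max :: "nat list \<Rightarrow> nat \<Rightarrow> nat" where
  "delta_max lam k = Max ((\<lambda>(i,j). min i j) ` diag lam k)"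

definition coord_k :: "nat list \<Rightarrow> nat \<times> nat \<Rightarrow> nat" where
  "coord_k lam b = hd lam + fst b - snd b"

definition coord_delta :: "nat list \<Rightarrow> nat \<times> nat \<Rightarrow> nat" where
  "coord_delta lam b = delta_max lam (coord_k lam b) - min (fst b) (snd b) + 1"

definition square :: "nat list \<Rightarrow> nat \<Rightarrow> (nat \<times> nat) set" where
  "square lam k = {b \<in> fer lam. \<exists>d \<in> diag lam k. fst b \<le> fst d \<and> snd b \<le> snd d}"

(* ---- Greene--Kleitman invariant ----
   A directed graph is given by a vertex set V and an arrow relation E;
   we always use the full subgraph on V. *)
definition is_dpath :: "'a set \<Rightarrow> ('a \<Rightarrow> 'a \<Rightarrow> bool) \<Rightarrow> 'a list \<Rightarrow> bool" where
  "is_dpath V E p \<longleftrightarrow> p \<noteq> [] \<and> set p \<subseteq> V \<and> successively E p"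

definition gk_M :: "'a set \<Rightarrow> ('a \<Rightarrow> 'a \<Rightarrow> bool) \<Rightarrow> ('a \<Rightarrow> nat) \<Rightarrow> nat \<Rightarrow> nat" where
  "gk_M V E g t = Max (insert 0
     {sum g (\<Union>p\<in>set ps. set p) | ps. length ps = t \<and> (\<forall>p\<in>set ps. is_dpath V E p)})"

definition gk :: "'a set \<Rightarrow> ('a \<Rightarrow> 'a \<Rightarrow> bool) \<Rightarrow> ('a \<Rightarrow> nat) \<Rightarrow> nat \<Rightarrow> nat" where
  "gk V E g t = gk_M V E g t - gk_M V E g (t - 1)"

definition hg_arrow :: "nat \<times> nat \<Rightarrow> nat \<times> nat \<Rightarrow> bool" where
  "hg_arrow a b \<longleftrightarrow> (fst b = fst a \<and> snd b = Suc (snd a)) \<or> (fst a = Suc (fst b) \<and> snd a = snd b)"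

(* fillings are functions on boxes; only values on Fer(lambda) matter,
   and the output filling is 0 outside Fer(lambda) *)
definition HG :: "nat list \<Rightarrow> (nat \<times> nat \<Rightarrow> nat) \<Rightarrow> (nat \<times> nat \<Rightarrow> nat)" where
  "HG lam f = (\<lambda>b. if b \<in> fer lam
      then gk (square lam (coord_k lam b)) hg_arrow f (coord_delta lam b) else 0)"

(* ---- row / column labels ----
   The south-east boundary consists of one vertical segment per row i
   (its east end) and one horizontal segment per column j (its south end).
   Walking from top-right to bottom-left, the segment of row i comes before
   that of column j iff j <= lambda_i.  The label of a segment is the number
   of segments up to and including it. *)
definition row_label :: "nat list \<Rightarrow> nat \<Rightarrow> nat" where
  "row_label lam i = i + card {j. lam ! (i - 1) < j \<and> j \<le> hd lam}"

definition col_label :: "nat list \<Rightarrow> nat \<Rightarrow> nat" where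
  "col_label lam j = card {i. 1 \<le> i \<and> i \<le> length lam \<and> j \<le> lam ! (i - 1)} + (hd lam + 1 - j)"

definition Lset :: "nat list \<Rightarrow> nat set" where
  "Lset lam = row_label lam ` {1..length lam}"

definition Rset :: "nat list \<Rightarrow> nat set" where
  "Rset lam = col_label lam ` {1..hd lam}"

definition label_box :: "nat list \<Rightarrow> nat \<Rightarrow> nat \<Rightarrow> nat \<times> nat" where
  "label_box lam l r = (the_inv_into {1..length lam} (row_label lam) l,
                        the_inv_into {1..hd lam} (col_label lam) r)"

definition rep :: "nat list \<Rightarrow> (nat \<times> nat \<Rightarrow> nat) \<Rightarrow> nat \<times> nat \<Rightarrow> nat" where
  "rep lam f = (\<lambda>(l,r). if l \<in> Lset lam \<and> r \<in> Rset lam \<and> l < r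
       then f (label_box lam l r) else 0)"

definition ar_arrow :: "(nat \<Rightarrow> nat) \<Rightarrow> nat \<times> nat \<Rightarrow> nat \<times> nat \<Rightarrow> bool" where
  "ar_arrow c a b \<longleftrightarrow>
     (fst b = fst a \<and> snd b = c (snd a) \<and> fst a < c (snd a)) \<or>
     (snd b = snd a \<and> fst b = c (fst a) \<and> c (fst a) < snd a)"

(* vertex set of AR^[k](c): transpositions (l,r), 1 <= l < r <= n+1, l <= k < r *)
definition ar_k :: "nat \<Rightarrow> nat \<Rightarrow> (nat \<times> nat) set" where
  "ar_k n k = {(l,r). 1 \<le> l \<and> l < r \<and> r \<le> n + 1 \<and> l \<le> k \<and> k < r}"

definition part_n :: "nat list \<Rightarrow> nat" where
  "part_n lam = hd lam + length lam - 1"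

definition RSK :: "nat list \<Rightarrow> (nat \<Rightarrow> nat) \<Rightarrow> (nat \<times> nat \<Rightarrow> nat) \<Rightarrow> (nat \<times> nat \<Rightarrow> nat)" where
  "RSK lam c f = (\<lambda>b. if b \<in> fer lam
      then gk (ar_k (part_n lam) (coord_k lam b)) (ar_arrow c) (rep lam f) (coord_delta lam b)
      else 0)"

definition long_cycle :: "nat \<Rightarrow> nat \<Rightarrow> nat" where
  "long_cycle n i = (if i \<le> n then i + 1 else 1)"

end

theory Submission
  imports Defs "HOL-Library.Product_Order"
begin

(* In both graphs a vertex set lies on one directed path iff it is a chain of a partial order:
   in the Hillman-Grassl graph on square_k(lambda) the order "weakly north-east", and in
   AR^[k](c) for the long cycle c, whose arrows increase l or r by one, the componentwise order
   on pairs (l, r).  A box (i, j) lies in square_k(lambda) iff its row label is at most k and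
   its column label exceeds k, so (i, j) |-> [row label, column label] maps square_k(lambda)
   order-reversingly onto the labelled vertices of AR^[k](c), and rep f vanishes on the other
   vertices.  Thus unions of t paths correspond in both directions, the maxima M_t coincide,
   and so do the Greene-Kleitman invariants. *)

lemma is_dpath_sorted_wrt:
  assumes "is_dpath V E p"
    and "\<And>x y. x \<in> V \<Longrightarrow> y \<in> V \<Longrightarrow> E x y \<Longrightarrow> R x y" and "transp R"
  shows "sorted_wrt R p"
proof -
  have "successively R p"
    using assms(1) by (auto simp: is_dpath_def intro!: successively_mono[of E] assms(2))
  then show ?thesis using successively_conv_sorted_wrt[OF assms(3)] by blast
qed

lemma dpath_between:
  fixes \<mu> :: "'a \<Rightarrow> 'a \<Rightarrow> nat"
  assumes step: "\<And>a b. a \<in> V \<Longrightarrow> b \<in> V \<Longrightarrow> R a b \<Longrightarrow> a \<noteq> b \<Longrightarrow>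
      \<exists>a'\<in>V. E a a' \<and> R a' b \<and> \<mu> a' b < \<mu> a b"
    and "a \<in> V" "b \<in> V" "R a b"
  shows "\<exists>p. is_dpath V E p \<and> hd p = a \<and> last p = b"
  using assms(2-)
proof (induction "\<mu> a b" arbitrary: a rule: less_induct)
  case less
  show ?case
  proof (cases "a = b")
    case True
    then show ?thesis using less.prems by (intro exI[of _ "[a]"]) (auto simp: is_dpath_def)
  next
    case False
    then obtain a' where a': "a' \<in> V" "E a a'" "R a' b" "\<mu> a' b < \<mu> a b"
      using step less.prems by blast
    then obtain p where p: "is_dpath V E p" "hd p = a'" "last p = b"
      using less.hyps[of a'] less.prems by blast
    then have "is_dpath V E (a # p)"
      using a' less.prems by (cases p) (auto simp: is_dpath_def)
    then show ?thesis using p by (intro exI[of _ "a # p"]) (auto simp: is_dpath_def)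
  qed
qed

lemma sorted_list_in_dpath:
  assumes between: "\<And>a b. a \<in> V \<Longrightarrow> b \<in> V \<Longrightarrow> R a b \<Longrightarrow>
      \<exists>p. is_dpath V E p \<and> hd p = a \<and> last p = b"
  shows "xs \<noteq> [] \<Longrightarrow> set xs \<subseteq> V \<Longrightarrow> sorted_wrt R xs \<Longrightarrow>
      \<exists>q. is_dpath V E q \<and> hd q = hd xs \<and> set xs \<subseteq> set q"
proof (induction xs)
  case Nil
  then show ?case by simp
next
  case (Cons x ys)
  show ?case
  proof (cases "ys = []")
    case True
    then show ?thesis using Cons.prems by (intro exI[of _ "[x]"]) (auto simp: is_dpath_def)
  next
    case False
    then obtain q where q: "is_dpath V E q" "hd q = hd ys" "set ys \<subseteq> set q"
      using Cons by auto
    then obtain q' where q': "q = hd ys # q'" by (metis is_dpath_def list.collapse)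
    have "R x (hd ys)" "hd ys \<in> V" using Cons.prems False by (cases ys; auto)+
    then obtain p where p: "is_dpath V E p" "hd p = x" "last p = hd ys"
      using between[of x "hd ys"] Cons.prems by auto
    have set_pq: "set (p @ q') = set p \<union> set q"
      using p q' by (auto simp: is_dpath_def) (metis last_in_set)
    have "is_dpath V E (p @ q')"
      using p q q' set_pq by (auto simp: is_dpath_def successively_append_iff successively_Cons)
    moreover have "hd (p @ q') = x" using p by (auto simp: is_dpath_def)
    moreover have "set (x # ys) \<subseteq> set (p @ q')"
      using p q set_pq by (auto simp: is_dpath_def)
    ultimately show ?thesis by (intro exI[of _ "p @ q'"]) simp
  qed
qed

lemma chain_in_dpath:
  assumes "\<And>a b. a \<in> V \<Longrightarrow> b \<in> V \<Longrightarrow> R a b \<Longrightarrow>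
      \<exists>p. is_dpath V E p \<and> hd p = a \<and> last p = b"
    and "V \<noteq> {}" "set xs \<subseteq> V" "sorted_wrt R xs"
  shows "\<exists>q. is_dpath V E q \<and> set xs \<subseteq> set q"
proof (cases "xs = []")
  case True
  obtain v where "v \<in> V" using assms(2) by blast
  then show ?thesis using True by (intro exI[of _ "[v]"]) (auto simp: is_dpath_def)
next
  case False
  then show ?thesis using sorted_list_in_dpath[OF assms(1)] assms(3,4) by blast
qed

lemma finite_dpath_weights:
  fixes g :: "'a \<Rightarrow> nat"
  assumes "finite V"
  shows "finite {sum g (\<Union>p\<in>set ps. set p) | ps. length ps = t \<and> (\<forall>p\<in>set ps. is_dpath V E p)}"
proof (rule finite_subset[of _ "{..sum g V}"])
  have "sum g (\<Union>p\<in>set ps. set p) \<le> sum g V" if "\<forall>p\<in>set ps. is_dpath V E p" for ps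
    using that by (intro sum_mono2[OF assms]) (auto simp: is_dpath_def)
  then show "{sum g (\<Union>p\<in>set ps. set p) | ps. length ps = t \<and> (\<forall>p\<in>set ps. is_dpath V E p)}
      \<subseteq> {..sum g V}" by auto
qed simp

lemma gk_M_le_if_dpaths_embed:
  fixes g :: "'a \<Rightarrow> nat" and g' :: "'b \<Rightarrow> nat"
  assumes "finite V" "finite V'" and inj: "inj_on \<phi> U"
    and weight: "\<And>v. v \<in> U \<Longrightarrow> g' (\<phi> v) = g v"
    and zero: "\<And>v. v \<in> V \<Longrightarrow> v \<notin> U \<Longrightarrow> g v = 0"
    and embed: "\<And>p. is_dpath V E p \<Longrightarrow> \<exists>q. is_dpath V' E' q \<and> \<phi> ` (set p \<inter> U) \<subseteq> set q"
  shows "gk_M V E g t \<le> gk_M V' E' g' t"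
proof -
  define S' where "S' = {sum g' (\<Union>q\<in>set qs. set q) | qs. length qs = t \<and> (\<forall>q\<in>set qs. is_dpath V' E' q)}"
  have "sum g (\<Union>p\<in>set ps. set p) \<le> Max (insert 0 S')"
    if ps: "length ps = t" "\<forall>p\<in>set ps. is_dpath V E p" for ps
  proof -
    obtain Q where Q: "\<And>p. p \<in> set ps \<Longrightarrow> is_dpath V' E' (Q p) \<and> \<phi> ` (set p \<inter> U) \<subseteq> set (Q p)"
      using embed ps(2) by metis
    define A where "A = (\<Union>p\<in>set ps. set p)"
    have "A \<subseteq> V" unfolding A_def using ps(2) by (auto simp: is_dpath_def)
    have "sum g A = sum g (A \<inter> U)"
      by (rule sum.mono_neutral_right) (use \<open>A \<subseteq> V\<close> zero in \<open>auto simp: A_def, fastforce\<close>)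
    also have "\<dots> = sum g' (\<phi> ` (A \<inter> U))"
      by (subst sum.reindex) (auto intro: inj_on_subset[OF inj] simp: weight)
    also have "\<dots> \<le> sum g' (\<Union>q\<in>set (map Q ps). set q)"
      using Q by (intro sum_mono2) (simp_all add: A_def, blast)
    also have "\<dots> \<le> Max (insert 0 S')"
    proof (rule Max_ge)
      show "finite (insert 0 S')" unfolding S'_def using finite_dpath_weights[OF assms(2)] by simp
      show "sum g' (\<Union>q\<in>set (map Q ps). set q) \<in> insert 0 S'"
        unfolding S'_def using Q ps(1) by (intro insertI2 CollectI exI[of _ "map Q ps"]) auto
    qed
    finally show ?thesis unfolding A_def .
  qed
  then show ?thesis
    unfolding gk_M_def S'_def[symmetric]
    by (intro Max.boundedI) (auto intro: finite_dpath_weights[OF assms(1)])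
qed

definition column_length :: "nat list \<Rightarrow> nat \<Rightarrow> nat" where
  "column_length lam j = card {i. 1 \<le> i \<and> i \<le> length lam \<and> j \<le> lam ! (i - 1)}"

lemma row_label_eq: "row_label lam i = i + (hd lam - lam ! (i - 1))"
proof -
  have "{j. lam ! (i - 1) < j \<and> j \<le> hd lam} = {lam ! (i - 1)<..hd lam}" by auto
  then show ?thesis unfolding row_label_def by simp
qed

lemma col_label_eq: "col_label lam j = column_length lam j + (hd lam + 1 - j)"
  unfolding col_label_def column_length_def ..

lemma column_length_le_length: "column_length lam j \<le> length lam"
proof -
  have "column_length lam j \<le> card {1..length lam}"
    unfolding column_length_def by (rule card_mono) auto
  then show ?thesis by simp
qed

lemma column_length_antimono: "j \<le> j' \<Longrightarrow> column_length lam j' \<le> column_length lam j"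
  unfolding column_length_def
  by (rule card_mono) (auto intro: finite_subset[of _ "{1..length lam}"])

lemma col_label_le_iff:
  assumes "1 \<le> j" "j \<le> hd lam" "1 \<le> j'" "j' \<le> hd lam"
  shows "col_label lam j \<le> col_label lam j' \<longleftrightarrow> j' \<le> j"
  using column_length_antimono[of j j' lam] column_length_antimono[of j' j lam] assms
  unfolding col_label_eq by (cases "j' \<le> j") auto

definition northeast_le :: "nat \<times> nat \<Rightarrow> nat \<times> nat \<Rightarrow> bool" where
  "northeast_le a b \<longleftrightarrow> fst b \<le> fst a \<and> snd a \<le> snd b"

lemma hg_dpath_sorted:
  assumes "is_dpath V hg_arrow p"
  shows "sorted_wrt northeast_le p"
  by (rule is_dpath_sorted_wrt[OF assms]) (auto simp: hg_arrow_def northeast_le_def transp_def)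

(* long_cycle n maps r to r + 1 for r \<le> n, so the arrows of AR(c) are (l, r) -> (l + 1, r)
   and (l, r) -> (l, r + 1) *)
lemma ar_dpath_sorted:
  assumes "is_dpath (ar_k n k) (ar_arrow (long_cycle n)) p"
  shows "sorted_wrt (\<le>) p"
  by (rule is_dpath_sorted_wrt[OF assms])
    (auto simp: ar_arrow_def long_cycle_def ar_k_def less_eq_prod_def split: if_splits
      intro: transpI order_trans)

lemma ar_dpath_between:
  assumes "a \<in> ar_k n k" "b \<in> ar_k n k" "a \<le> b"
  shows "\<exists>p. is_dpath (ar_k n k) (ar_arrow (long_cycle n)) p \<and> hd p = a \<and> last p = b"
proof (rule dpath_between[where \<mu> = "\<lambda>a b. (fst b - fst a) + (snd b - snd a)"
    and R = "(\<le>)" and E = "ar_arrow (long_cycle n)" and V = "ar_k n k", OF _ assms])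
  fix a b :: "nat \<times> nat"
  assume ab: "a \<in> ar_k n k" "b \<in> ar_k n k" "a \<le> b" "a \<noteq> b"
  consider "fst a < fst b" | "fst a = fst b" "snd a < snd b"
    using ab(3,4) by (cases a, cases b) fastforce
  then show "\<exists>a'\<in>ar_k n k. ar_arrow (long_cycle n) a a' \<and> a' \<le> b \<and>
      (fst b - fst a') + (snd b - snd a') < (fst b - fst a) + (snd b - snd a)"
  proof cases
    case 1
    then show ?thesis using ab
      by (intro bexI[of _ "(fst a + 1, snd a)"])
        (auto simp: ar_arrow_def ar_k_def long_cycle_def less_eq_prod_def)
  next
    case 2
    then show ?thesis using ab
      by (intro bexI[of _ "(fst a, snd a + 1)"])
        (auto simp: ar_arrow_def ar_k_def long_cycle_def less_eq_prod_def)
  qed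
qed

lemma finite_ar_k: "finite (ar_k n k)"
  by (rule finite_subset[of _ "{..n + 1} \<times> {..n + 1}"]) (auto simp: ar_k_def)

abbreviation box_labels :: "nat list \<Rightarrow> nat \<times> nat \<Rightarrow> nat \<times> nat" where
  "box_labels lam \<equiv> map_prod (row_label lam) (col_label lam)"

context
  fixes lam :: "nat list"
  assumes partition: "is_partition lam" and nonempty: "lam \<noteq> []"
begin

lemma partition_nth_antimono:
  assumes "1 \<le> i" "i \<le> i'" "i' \<le> length lam"
  shows "lam ! (i' - 1) \<le> lam ! (i - 1)"
proof (cases "i = i'")
  case False
  then have "i - 1 < i' - 1" "i' - 1 < length lam" using assms by auto
  then show ?thesis using partition unfolding is_partition_def by (auto dest: sorted_wrt_nth_less)
qed simp

lemma partition_nth_le_hd: "1 \<le> i \<Longrightarrow> i \<le> length lam \<Longrightarrow> lam ! (i - 1) \<le> hd lam"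
  using partition_nth_antimono[of 1 i] nonempty by (simp add: hd_conv_nth)

lemma le_column_length_iff:
  assumes "1 \<le> i" "i \<le> length lam"
  shows "i \<le> column_length lam j \<longleftrightarrow> j \<le> lam ! (i - 1)"
proof
  assume "j \<le> lam ! (i - 1)"
  then have "{1..i} \<subseteq> {i. 1 \<le> i \<and> i \<le> length lam \<and> j \<le> lam ! (i - 1)}"
    using assms partition_nth_antimono by fastforce
  then have "card {1..i} \<le> column_length lam j"
    unfolding column_length_def
    by (rule card_mono[rotated]) (auto intro: finite_subset[of _ "{1..length lam}"])
  then show "i \<le> column_length lam j" by simp
next
  assume "i \<le> column_length lam j"
  show "j \<le> lam ! (i - 1)"
  proof (rule ccontr)
    assume "\<not> j \<le> lam ! (i - 1)"
    then have "{i. 1 \<le> i \<and> i \<le> length lam \<and> j \<le> lam ! (i - 1)} \<subseteq> {1..<i}"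
      using partition_nth_antimono[of i] assms by clarsimp (meson le_trans not_le)
    then have "column_length lam j \<le> card {1..<i}"
      unfolding column_length_def by (rule card_mono[rotated]) simp
    then show False using \<open>i \<le> column_length lam j\<close> assms by simp
  qed
qed

lemma row_label_le_iff:
  assumes "1 \<le> i" "i \<le> length lam" "1 \<le> i'" "i' \<le> length lam"
  shows "row_label lam i \<le> row_label lam i' \<longleftrightarrow> i \<le> i'"
  using partition_nth_antimono[of i i'] partition_nth_antimono[of i' i]
    partition_nth_le_hd[of i] partition_nth_le_hd[of i'] assms
  unfolding row_label_eq by (cases "i \<le> i'") auto

lemma label_box_labels:
  assumes "1 \<le> i" "i \<le> length lam" "1 \<le> j" "j \<le> hd lam"
  shows "label_box lam (row_label lam i) (col_label lam j) = (i, j)"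
proof -
  have "inj_on (row_label lam) {1..length lam}"
    unfolding inj_on_def by (metis antisym atLeastAtMost_iff order.refl row_label_le_iff)
  moreover have "inj_on (col_label lam) {1..hd lam}"
    unfolding inj_on_def by (metis antisym atLeastAtMost_iff order.refl col_label_le_iff)
  ultimately show ?thesis
    unfolding label_box_def using assms by (simp add: the_inv_into_f_f)
qed

lemma fer_subset_rectangle: "fer lam \<subseteq> {1..length lam} \<times> {1..hd lam}"
  using partition_nth_le_hd by (fastforce simp: fer_def)

lemma square_subset_rectangle: "square lam k \<subseteq> {1..length lam} \<times> {1..hd lam}"
  using fer_subset_rectangle by (auto simp: square_def)

lemma square_imp_labels:
  assumes "(i, j) \<in> square lam k"
  shows "row_label lam i \<le> k \<and> k < col_label lam j"
proof -
  obtain i' j' where d: "(i', j') \<in> diag lam k" "i \<le> i'" "j \<le> j'" and "(i, j) \<in> fer lam"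
    using assms by (auto simp: square_def)
  then have "1 \<le> i" "1 \<le> i'" "i' \<le> length lam" "j' \<le> lam ! (i' - 1)" "hd lam + i' = k + j'"
    by (auto simp: diag_def fer_def)
  moreover have "lam ! (i' - 1) \<le> lam ! (i - 1)" "lam ! (i - 1) \<le> hd lam"
    using partition_nth_antimono partition_nth_le_hd d calculation by auto
  moreover have "i' \<le> column_length lam j"
    using le_column_length_iff d calculation by auto
  ultimately show ?thesis using d unfolding row_label_eq col_label_eq by linarith
qed

lemma labels_imp_square:
  assumes range: "1 \<le> i" "i \<le> length lam" "1 \<le> j" "j \<le> hd lam"
    and labels: "row_label lam i \<le> k" "k < col_label lam j"
  shows "(i, j) \<in> square lam k"
proof -
  have "lam ! (i - 1) \<le> hd lam" using partition_nth_le_hd range by auto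
  have "j \<le> lam ! (i - 1)"
  proof (rule ccontr)
    assume "\<not> j \<le> lam ! (i - 1)"
    then have "column_length lam j < i"
      using le_column_length_iff[OF range(1,2), of j] by (metis not_le)
    then show False
      using labels range \<open>\<not> j \<le> lam ! (i - 1)\<close> unfolding row_label_eq col_label_eq by linarith
  qed
  then have "(i, j) \<in> fer lam" using range by (simp add: fer_def)
  \<comment> \<open>the box of D_k dominating (i, j) lies in column j or in row i\<close>
  consider (column) "hd lam + i \<le> k + j" | (row) "k + j < hd lam + i" by linarith
  then obtain d where "d \<in> diag lam k" "i \<le> fst d" "j \<le> snd d"
  proof cases
    case column
    define i' where "i' = k + j - hd lam"
    have "i' \<le> column_length lam j"
      using labels column range unfolding col_label_eq i'_def by linarith
    moreover have "i \<le> i'" "1 \<le> i'" using column range unfolding i'_def by auto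
    moreover have "i' \<le> length lam" using calculation column_length_le_length order.trans by blast
    ultimately have "(i', j) \<in> diag lam k"
      using le_column_length_iff column range by (auto simp: i'_def diag_def fer_def)
    then show thesis using that \<open>i \<le> i'\<close> by auto
  next
    case row
    define j' where "j' = hd lam + i - k"
    have "j' \<le> lam ! (i - 1)"
      using labels \<open>lam ! (i - 1) \<le> hd lam\<close> unfolding row_label_eq j'_def by linarith
    then have "(i, j') \<in> diag lam k" using row range by (simp add: j'_def diag_def fer_def)
    then show thesis using that row unfolding j'_def by fastforce
  qed
  then show ?thesis using \<open>(i, j) \<in> fer lam\<close> unfolding square_def by fastforce
qed

lemma square_down_closed:
  assumes "(i, j) \<in> square lam k" "1 \<le> i'" "i' \<le> i" "1 \<le> j'" "j' \<le> j"
  shows "(i', j') \<in> square lam k"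
proof -
  have range: "(i, j) \<in> {1..length lam} \<times> {1..hd lam}"
    using assms(1) square_subset_rectangle by blast
  then have "row_label lam i' \<le> row_label lam i" "col_label lam j \<le> col_label lam j'"
    using assms(2-) row_label_le_iff col_label_le_iff by auto
  then show ?thesis
    using assms range square_imp_labels[OF assms(1)]
    by (intro labels_imp_square) auto
qed

lemma fer_in_square_coord_k: "b \<in> fer lam \<Longrightarrow> b \<in> square lam (coord_k lam b)"
  using fer_subset_rectangle by (force simp: square_def diag_def coord_k_def)

lemma hg_dpath_between:
  assumes "a \<in> square lam k" "b \<in> square lam k" "northeast_le a b"
  shows "\<exists>p. is_dpath (square lam k) hg_arrow p \<and> hd p = a \<and> last p = b"
proof (rule dpath_between[where \<mu> = "\<lambda>a b. (fst a - fst b) + (snd b - snd a)"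
    and R = northeast_le and E = hg_arrow and V = "square lam k", OF _ assms])
  fix a b
  assume ab: "a \<in> square lam k" "b \<in> square lam k" "northeast_le a b" "a \<noteq> b"
  have range: "a \<in> {1..length lam} \<times> {1..hd lam}" "b \<in> {1..length lam} \<times> {1..hd lam}"
    using ab(1,2) square_subset_rectangle by blast+
  consider "fst b < fst a" | "fst a = fst b" "snd a < snd b"
    using ab(3,4) by (cases a, cases b) (fastforce simp: northeast_le_def)
  then show "\<exists>a'\<in>square lam k. hg_arrow a a' \<and> northeast_le a' b \<and>
      (fst a' - fst b) + (snd b - snd a') < (fst a - fst b) + (snd b - snd a)"
  proof cases
    case 1
    then have "(fst a - 1, snd a) \<in> square lam k"
      using square_down_closed[of "fst a" "snd a"] ab(1) range by auto
    then show ?thesis using 1 ab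
      by (intro bexI[of _ "(fst a - 1, snd a)"]) (auto simp: hg_arrow_def northeast_le_def)
  next
    case 2
    then have "(fst a, snd a + 1) \<in> square lam k"
      using square_down_closed[of "fst b" "snd b"] ab(2) range by auto
    then show ?thesis using 2 ab
      by (intro bexI[of _ "(fst a, snd a + 1)"]) (auto simp: hg_arrow_def northeast_le_def)
  qed
qed

lemma box_labels_le_iff:
  assumes "v \<in> {1..length lam} \<times> {1..hd lam}" "w \<in> {1..length lam} \<times> {1..hd lam}"
  shows "box_labels lam v \<le> box_labels lam w \<longleftrightarrow> northeast_le w v"
  using assms row_label_le_iff col_label_le_iff
  by (cases v, cases w) (auto simp: northeast_le_def)

lemma box_labels_in_ar_k:
  assumes "v \<in> square lam k"
  shows "box_labels lam v \<in> ar_k (part_n lam) k"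
proof (cases v)
  case (Pair i j)
  have "row_label lam i \<le> k \<and> k < col_label lam j"
    using square_imp_labels assms Pair by simp
  moreover have "1 \<le> i" "1 \<le> j"
    using subsetD[OF square_subset_rectangle assms] Pair by auto
  moreover have "i \<le> row_label lam i" "col_label lam j \<le> part_n lam + 1"
    using column_length_le_length[of lam j] nonempty \<open>1 \<le> j\<close>
    unfolding row_label_eq col_label_eq part_n_def by (auto simp: neq_Nil_conv)
  ultimately show ?thesis using Pair by (auto simp: ar_k_def)
qed

lemma rep_box_labels:
  assumes "v \<in> square lam k"
  shows "rep lam f (box_labels lam v) = f v"
proof (cases v)
  case (Pair i j)
  have range: "1 \<le> i" "i \<le> length lam" "1 \<le> j" "j \<le> hd lam"
    using subsetD[OF square_subset_rectangle assms] Pair by auto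
  then have "row_label lam i \<in> Lset lam" "col_label lam j \<in> Rset lam"
    by (auto simp: Lset_def Rset_def)
  moreover have "row_label lam i < col_label lam j"
    using square_imp_labels assms Pair by fastforce
  ultimately show ?thesis
    using label_box_labels[OF range] Pair by (simp add: rep_def)
qed

lemma labelled_vertex_in_square:
  assumes "(l, r) \<in> ar_k n k" "l \<in> Lset lam" "r \<in> Rset lam"
  shows "label_box lam l r \<in> square lam k \<and> box_labels lam (label_box lam l r) = (l, r)"
proof -
  obtain i j where range: "1 \<le> i" "i \<le> length lam" "1 \<le> j" "j \<le> hd lam"
    and lr: "l = row_label lam i" "r = col_label lam j"
    using assms(2,3) by (auto simp: Lset_def Rset_def)
  then show ?thesis
    using assms(1) label_box_labels[OF range]
      labels_imp_square[OF range] by (auto simp: ar_k_def)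
qed

lemma finite_square: "finite (square lam k)"
  using square_subset_rectangle by (rule finite_subset) simp

lemma gk_M_square_le_ar_k:
  assumes "square lam k \<noteq> {}"
  shows "gk_M (square lam k) hg_arrow f t
    \<le> gk_M (ar_k (part_n lam) k) (ar_arrow (long_cycle (part_n lam))) (rep lam f) t"
proof (rule gk_M_le_if_dpaths_embed[where \<phi> = "box_labels lam" and U = "square lam k"])
  have range: "v \<in> {1..length lam} \<times> {1..hd lam}" if "v \<in> square lam k" for v
    using square_subset_rectangle that by blast
  show "inj_on (box_labels lam) (square lam k)"
  proof (rule inj_on_inverseI)
    fix v assume "v \<in> square lam k"
    then show "case_prod (label_box lam) (box_labels lam v) = v"
      using range label_box_labels by (cases v) auto
  qed
  fix p assume p: "is_dpath (square lam k) hg_arrow p"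
  then have p_square: "set p \<subseteq> square lam k" by (simp add: is_dpath_def)
  have "sorted_wrt (\<lambda>v w. box_labels lam w \<le> box_labels lam v) p"
  proof (rule sorted_wrt_mono_rel[OF _ hg_dpath_sorted[OF p]])
    fix v w assume "v \<in> set p" "w \<in> set p" "northeast_le v w"
    then show "box_labels lam w \<le> box_labels lam v"
      using box_labels_le_iff[of w v] range p_square by blast
  qed
  then have "sorted_wrt (\<le>) (rev (map (box_labels lam) p))"
    by (simp add: sorted_wrt_rev sorted_wrt_map)
  moreover have "set (rev (map (box_labels lam) p)) \<subseteq> ar_k (part_n lam) k"
    using p_square box_labels_in_ar_k by auto
  moreover have "ar_k (part_n lam) k \<noteq> {}"
    using assms box_labels_in_ar_k by blast
  ultimately obtain q where "is_dpath (ar_k (part_n lam) k) (ar_arrow (long_cycle (part_n lam))) q"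
    "set (rev (map (box_labels lam) p)) \<subseteq> set q"
    using chain_in_dpath[OF ar_dpath_between] by blast
  then show "\<exists>q. is_dpath (ar_k (part_n lam) k) (ar_arrow (long_cycle (part_n lam))) q
      \<and> box_labels lam ` (set p \<inter> square lam k) \<subseteq> set q"
    by auto
qed (auto simp: finite_square finite_ar_k rep_box_labels)

lemma gk_M_ar_k_le_square:
  assumes "square lam k \<noteq> {}"
  shows "gk_M (ar_k (part_n lam) k) (ar_arrow (long_cycle (part_n lam))) (rep lam f) t
    \<le> gk_M (square lam k) hg_arrow f t"
proof -
  define U where "U = {v \<in> ar_k (part_n lam) k. fst v \<in> Lset lam \<and> snd v \<in> Rset lam}"
  define \<psi> where "\<psi> = case_prod (label_box lam)"
  have \<psi>: "\<psi> v \<in> square lam k" "box_labels lam (\<psi> v) = v" if "v \<in> U" for v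
    using that labelled_vertex_in_square by (cases v; auto simp: U_def \<psi>_def)+
  show ?thesis
  proof (rule gk_M_le_if_dpaths_embed[where \<phi> = \<psi> and U = U])
    show "inj_on \<psi> U" by (rule inj_on_inverseI[where g = "box_labels lam"]) (rule \<psi>)
    show "f (\<psi> v) = rep lam f v" if "v \<in> U" for v
      using that by (cases v) (auto simp: U_def \<psi>_def rep_def ar_k_def)
    show "rep lam f v = 0" if "v \<in> ar_k (part_n lam) k" "v \<notin> U" for v
      using that by (cases v) (auto simp: U_def rep_def)
    fix p assume p: "is_dpath (ar_k (part_n lam) k) (ar_arrow (long_cycle (part_n lam))) p"
    define xs where "xs = rev (map \<psi> (filter (\<lambda>v. v \<in> U) p))"
    have "sorted_wrt (\<lambda>v w. northeast_le (\<psi> w) (\<psi> v)) (filter (\<lambda>v. v \<in> U) p)"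
    proof (rule sorted_wrt_mono_rel[OF _ sorted_wrt_filter[OF ar_dpath_sorted[OF p]]])
      fix v w assume "v \<in> set (filter (\<lambda>v. v \<in> U) p)" "w \<in> set (filter (\<lambda>v. v \<in> U) p)" "v \<le> w"
      then have "v \<in> U" "w \<in> U" by auto
      then have "\<psi> v \<in> {1..length lam} \<times> {1..hd lam}" "\<psi> w \<in> {1..length lam} \<times> {1..hd lam}"
        using \<psi>(1) square_subset_rectangle by blast+
      then show "northeast_le (\<psi> w) (\<psi> v)"
        using box_labels_le_iff \<psi>(2) \<open>v \<in> U\<close> \<open>w \<in> U\<close> \<open>v \<le> w\<close>
        by metis
    qed
    then have "sorted_wrt northeast_le xs" by (simp add: xs_def sorted_wrt_rev sorted_wrt_map)
    moreover have "set xs \<subseteq> square lam k" using \<psi> by (auto simp: xs_def)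
    ultimately obtain q where "is_dpath (square lam k) hg_arrow q" "set xs \<subseteq> set q"
      using chain_in_dpath[OF hg_dpath_between assms] by blast
    then show "\<exists>q. is_dpath (square lam k) hg_arrow q \<and> \<psi> ` (set p \<inter> U) \<subseteq> set q"
      by (auto simp: xs_def)
  qed (simp_all add: finite_square finite_ar_k)
qed

end

theorem proposition6p5:
  fixes lam :: "nat list" and n :: nat
  assumes "is_partition lam" and "lam \<noteq> []"
    and "hd lam + length lam - 1 = n" and "n \<ge> 1"
  shows "RSK lam (long_cycle n) = HG lam"
proof (intro ext)
  fix f b
  have n: "part_n lam = n" using assms(3) unfolding part_n_def .
  show "RSK lam (long_cycle n) f b = HG lam f b"
  proof (cases "b \<in> fer lam")
    case True
    define k where "k = coord_k lam b"
    have "square lam k \<noteq> {}" using fer_in_square_coord_k[OF assms(1,2) True] k_def by blast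
    then have "gk_M (ar_k n k) (ar_arrow (long_cycle n)) (rep lam f) t
        = gk_M (square lam k) hg_arrow f t" for t
      using gk_M_square_le_ar_k[OF assms(1,2)] gk_M_ar_k_le_square[OF assms(1,2)] n
      by (simp add: order_antisym)
    then show ?thesis using True by (simp add: RSK_def HG_def gk_def n k_def)
  qed (simp add: RSK_def HG_def)
qed

end
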